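(* Let $\mathcal{X}=\mathbb{T}^d$, consider the diffusion $dX_t=b(X_t)\,dt+dW_t$ with $b\in C^\infty(\mathbb{T}^d)$, let $f\in C^\infty(\mathbb{T}^d)$, and let $Q^f_{\Delta t}$ be a consistent discretization of the associated Feynman–Kac semigroup satisfying Assumption 6. Then there exists $\Delta t^{**}>0$ such that for every $\Delta t\in(0,\Delta t^{**}]$ the discrete Feynman–Kac dynamics $\Phi_k(\mu)(\varphi)=\mu((Q^f_{\Delta t})^k\varphi)/\mu((Q^f_{\Delta t})^k\mathbb{1})$ admits a unique invariant probability measure $\mu^*_{f,\Delta t}$ (fixed point of $\Phi_1$), and there exist $\kappa>0$, $C>0$ (independent of $\Delta t$) such that for every bounded measurable $\varphi$, every probability measure $\mu$ on $\mathbb{T}^d$ and every $\Delta t\in(0,\Delta t^{**}]$, $$\forall\,k\geq0,\quad \big|\Phi_k(\mu)(\varphi)-\mu^*_{f,\Delta t}(\varphi)\big|\leq Ce^{-\kappa k\Delta t}\|\varphi\|_{L^\infty}.$$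
   Context: Generator $\mathcal{L}=b\cdot\nabla+\frac12\Delta$. $\lceil a\rceil$ is the upper integer part; $\mathbb{1}$ is the constant function $1$; $\Phi_0(\mu)=\mu$. Consistent discretization: a kernel operator $Q^f_{\Delta t}$ (depending on a time step $\Delta t>0$) such that for every bounded measurable $\varphi$, $Q^f_{\Delta t}\varphi$ is continuous (strong Feller), and there exist $\Delta t^*>0$, $C>0$, $p\in\mathbb{N}$ and operators $\mathcal{R}_{\Delta t}:C^\infty(\mathbb{T}^d)\to C^\infty(\mathbb{T}^d)$ such that for all $\varphi\in C^\infty$, $Q^f_{\Delta t}\varphi=\varphi+\Delta t(\mathcal{L}+f)\varphi+\Delta t^2\mathcal{R}_{\Delta t}\varphi$ with $\|\mathcal{R}_{\Delta t}\varphi\|_{L^\infty}\leq C\sup_{|m|\leq p}\|\partial^m\varphi\|_{L^\infty}$ for all $\Delta t\in(0,\Delta t^*]$. Assumption 6 (uniform minorization and boundedness): for a fixed $T>0$ there exist $\Delta t^*>0$, a probability measure $\eta$ on $\mathbb{T}^d$ and $\alpha\in(0,1)$ such that for every $\Delta t\in(0,\Delta t^*]$, $Q^f_{\Delta t}$ is strong Feller and for every bounded measurable $\varphi\geq0$ and all $x$: $\alpha\eta(\varphi)\leq\big((Q^f_{\Delta t})^{\lceil T/\Delta t\rceil}\varphi\big)(x)\leq\alpha^{-1}\eta(\varphi)$. *)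

theory Defs
  imports "HOL-Analysis.Analysis" "HOL-Probability.Probability"
begin

text \<open>The torus T^d is represented by R^d (type real^'d) modulo Z^d: functions on
  T^d are Z^d-periodic functions on R^d, measures on T^d are measures on R^d
  concentrated on the fundamental cube [0,1)^d.\<close>

definition periodic :: "(real^'d \<Rightarrow> 'b) \<Rightarrow> bool" where
  "periodic g \<longleftrightarrow> (\<forall>x i. g (x + axis i 1) = g x)"

definition cube :: "(real^'d::finite) set" where
  "cube = {x. \<forall>i. 0 \<le> x $ i \<and> x $ i < 1}"

definition pd :: "'d::finite \<Rightarrow> (real^'d \<Rightarrow> real) \<Rightarrow> real^'d \<Rightarrow> real" where
  "pd i g x = deriv (\<lambda>t. g (x + t *\<^sub>R axis i 1)) 0"

fun pdm :: "'d::finite list \<Rightarrow> (real^'d \<Rightarrow> real) \<Rightarrow> real^'d \<Rightarrow> real" where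
  "pdm [] g = g"
| "pdm (i # ms) g = pd i (pdm ms g)"

definition smooth :: "(real^'d::finite \<Rightarrow> real) \<Rightarrow> bool" where
  "smooth g \<longleftrightarrow> (\<forall>ms. continuous_on UNIV (pdm ms g) \<and>
      (\<forall>i x. (\<lambda>t. pdm ms g (x + t *\<^sub>R axis i 1)) differentiable (at 0)))"

definition smooth_torus :: "(real^'d::finite \<Rightarrow> real) \<Rightarrow> bool" where
  "smooth_torus g \<longleftrightarrow> smooth g \<and> periodic g"

definition bmeas_torus :: "(real^'d::finite \<Rightarrow> real) \<Rightarrow> bool" where
  "bmeas_torus g \<longleftrightarrow> periodic g \<and> g \<in> borel_measurable borel \<and> bounded (range g)"

text \<open>Sup norm (the L^infinity norm of the statement, taken pointwise).\<close>
definition supnorm :: "(real^'d::finite \<Rightarrow> real) \<Rightarrow> real" where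
  "supnorm g = (SUP x. \<bar>g x\<bar>)"

definition torus_prob :: "(real^'d::finite) measure \<Rightarrow> bool" where
  "torus_prob \<mu> \<longleftrightarrow> prob_space \<mu> \<and> sets \<mu> = sets borel \<and> emeasure \<mu> cube = 1"

definition gen :: "(real^'d::finite \<Rightarrow> real^'d) \<Rightarrow> (real^'d \<Rightarrow> real) \<Rightarrow> real^'d \<Rightarrow> real" where
  "gen b g x = (\<Sum>i\<in>UNIV. b x $ i * pd i g x) + (1/2) * (\<Sum>i\<in>UNIV. pd i (pd i g) x)"

definition Qop :: "(real \<Rightarrow> real^'d::finite \<Rightarrow> (real^'d) measure) \<Rightarrow> real
    \<Rightarrow> (real^'d \<Rightarrow> real) \<Rightarrow> real^'d \<Rightarrow> real" where
  "Qop K dt g x = integral\<^sup>L (K dt x) g"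

definition kernel_torus :: "(real \<Rightarrow> real^'d::finite \<Rightarrow> (real^'d) measure) \<Rightarrow> bool" where
  "kernel_torus K \<longleftrightarrow> (\<forall>dt>0. \<forall>x.
      finite_measure (K dt x) \<and> sets (K dt x) = sets borel \<and>
      emeasure (K dt x) (UNIV - cube) = 0 \<and>
      (\<forall>i. K dt (x + axis i 1) = K dt x))"

definition strong_feller :: "(real \<Rightarrow> real^'d::finite \<Rightarrow> (real^'d) measure) \<Rightarrow> real \<Rightarrow> bool" where
  "strong_feller K dt \<longleftrightarrow> (\<forall>g. bmeas_torus g \<longrightarrow> continuous_on UNIV (Qop K dt g))"

definition consistent_discretization ::
  "(real^'d::finite \<Rightarrow> real^'d) \<Rightarrow> (real^'d \<Rightarrow> real) \<Rightarrow> (real \<Rightarrow> real^'d \<Rightarrow> (real^'d) measure) \<Rightarrow> bool" where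
  "consistent_discretization b f K \<longleftrightarrow>
     kernel_torus K \<and> (\<forall>dt>0. strong_feller K dt) \<and>
     (\<exists>dtstar>0. \<exists>C>0. \<exists>p::nat. \<exists>R :: real \<Rightarrow> (real^'d \<Rightarrow> real) \<Rightarrow> (real^'d \<Rightarrow> real).
        \<forall>dt. 0 < dt \<and> dt \<le> dtstar \<longrightarrow> (\<forall>g. smooth_torus g \<longrightarrow>
          smooth_torus (R dt g) \<and>
          (\<forall>x. Qop K dt g x = g x + dt * (gen b g x + f x * g x) + dt\<^sup>2 * R dt g x) \<and>
          supnorm (R dt g) \<le> C * Sup {supnorm (pdm ms g) | ms. length ms \<le> p}))"

definition assumption6 :: "(real \<Rightarrow> real^'d::finite \<Rightarrow> (real^'d) measure) \<Rightarrow> real \<Rightarrow> bool" where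
  "assumption6 K T \<longleftrightarrow>
     (\<exists>dtstar>0. \<exists>\<eta>. torus_prob \<eta> \<and> (\<exists>\<alpha>. 0 < \<alpha> \<and> \<alpha> < 1 \<and>
        (\<forall>dt. 0 < dt \<and> dt \<le> dtstar \<longrightarrow> strong_feller K dt \<and>
          (\<forall>g. bmeas_torus g \<and> (\<forall>x. 0 \<le> g x) \<longrightarrow> (\<forall>x.
             \<alpha> * integral\<^sup>L \<eta> g \<le> (Qop K dt ^^ nat \<lceil>T / dt\<rceil>) g x \<and>
             (Qop K dt ^^ nat \<lceil>T / dt\<rceil>) g x \<le> integral\<^sup>L \<eta> g / \<alpha>)))))"

definition Phi :: "(real \<Rightarrow> real^'d::finite \<Rightarrow> (real^'d) measure) \<Rightarrow> real \<Rightarrow> nat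
    \<Rightarrow> (real^'d) measure \<Rightarrow> (real^'d \<Rightarrow> real) \<Rightarrow> real" where
  "Phi K dt k \<mu> g = integral\<^sup>L \<mu> ((Qop K dt ^^ k) g) / integral\<^sup>L \<mu> ((Qop K dt ^^ k) (\<lambda>_. 1))"

definition FK_invariant :: "(real \<Rightarrow> real^'d::finite \<Rightarrow> (real^'d) measure) \<Rightarrow> real
    \<Rightarrow> (real^'d) measure \<Rightarrow> bool" where
  "FK_invariant K dt \<nu> \<longleftrightarrow> (\<forall>g. bmeas_torus g \<longrightarrow> Phi K dt 1 \<nu> g = integral\<^sup>L \<nu> g)"

end

theory Submission
  imports Defs
begin

(* The normalized dynamics is governed by the ratio Q^k g / Q^k 1, where Q is the discrete
   Feynman-Kac kernel. With n = ceil (T / dt), Assumption 6 is a two-sided Doeblin condition: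
   alpha eta(h) <= Q^n h <= eta(h) / alpha for every h >= 0. If m <= Q^k g / Q^k 1 <= M, applying
   it to the nonnegative functions Q^k g - m Q^k 1 and M Q^k 1 - Q^k g shrinks the range [m, M]
   by the factor 1 - alpha^2 after n further steps. Hence Phi_k(mu)(g) converges geometrically,
   uniformly in mu, and since n dt <= 2 T the rate per unit time does not depend on dt.
   The limit of Phi_k(eta)(g) is a positive normalized linear functional that is continuous under
   bounded pointwise convergence, hence integration against a probability measure on the torus;
   this measure is invariant, and uniqueness follows from the same contraction. *)

lemma periodic_int_shift:
  assumes "periodic g"
  shows "g (x + of_int k *\<^sub>R axis i 1) = g x"
proof (induction k rule: int_induct[where k=0])
  case base
  then show ?case by simp
next
  case (step1 j)
  have "g (x + of_int (j + 1) *\<^sub>R axis i 1) = g ((x + of_int j *\<^sub>R axis i 1) + axis i 1)"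
    by (simp add: algebra_simps)
  then show ?case
    using assms step1.IH unfolding periodic_def by simp
next
  case (step2 j)
  have "g (x + of_int j *\<^sub>R axis i 1) = g ((x + of_int (j - 1) *\<^sub>R axis i 1) + axis i 1)"
    by (simp add: algebra_simps)
  then show ?case
    using assms step2.IH unfolding periodic_def by simp
qed

lemma periodic_lattice_shift:
  assumes "periodic g" "finite S"
  shows "g (x + (\<Sum>i\<in>S. of_int (c i) *\<^sub>R axis i 1)) = g x"
  using assms(2)
proof (induction S arbitrary: x)
  case (insert j S)
  have "g (x + (\<Sum>i\<in>insert j S. of_int (c i) *\<^sub>R axis i 1)) =
        g ((x + (\<Sum>i\<in>S. of_int (c i) *\<^sub>R axis i 1)) + of_int (c j) *\<^sub>R axis j 1)"
    using insert by (simp add: algebra_simps)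
  then show ?case
    using periodic_int_shift[OF assms(1)] insert.IH by simp
qed simp

definition frac_vec :: "real^'d::finite \<Rightarrow> real^'d" where
  "frac_vec x = (\<chi> i. frac (x $ i))"

lemma frac_vec_decomp: "x = frac_vec x + (\<Sum>i\<in>UNIV. of_int \<lfloor>x $ i\<rfloor> *\<^sub>R axis i 1)"
  unfolding frac_vec_def by (simp add: vec_eq_iff axis_def frac_def if_distrib cong: if_cong)

lemma periodic_frac_vec: "periodic g \<Longrightarrow> g (frac_vec x) = g x"
  using periodic_lattice_shift[of g UNIV "frac_vec x" "\<lambda>i. \<lfloor>x $ i\<rfloor>"] frac_vec_decomp[of x]
  by simp

lemma frac_vec_in_cube: "frac_vec x \<in> cube"
  unfolding frac_vec_def cube_def by (simp add: frac_lt_1)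

lemma frac_vec_cube: "x \<in> cube \<Longrightarrow> frac_vec x = x"
  unfolding frac_vec_def cube_def by (simp add: vec_eq_iff frac_eq)

lemma frac_vec_shift: "frac_vec (x + axis i 1) = frac_vec x"
  unfolding frac_vec_def by (auto simp: vec_eq_iff axis_def frac_1_eq)

lemma periodic_frac_vec_comp: "periodic (\<lambda>x. h (frac_vec x))"
  unfolding periodic_def by (simp add: frac_vec_shift)

lemma borel_measurable_frac_vec: "frac_vec \<in> borel_measurable borel"
proof -
  have "(\<lambda>x. frac_vec x $ i) \<in> borel_measurable borel" for i
    unfolding frac_vec_def frac_def by simp
  then show ?thesis
    unfolding borel_measurable_euclidean_space[where f=frac_vec]
    by (auto simp: Basis_vec_def inner_axis)
qed

lemma cube_borel: "(cube :: (real^'d::finite) set) \<in> sets borel"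
proof -
  have "cube = (\<Inter>i\<in>UNIV. {x::real^'d. 0 \<le> x $ i} \<inter> {x. x $ i < 1})"
    unfolding cube_def by auto
  moreover have "{x::real^'d. 0 \<le> x $ i} \<in> sets borel" "{x::real^'d. x $ i < 1} \<in> sets borel"
    for i by measurable
  then have "(\<Inter>i\<in>UNIV. {x::real^'d. 0 \<le> x $ i} \<inter> {x. x $ i < 1}) \<in> sets borel"
    by (intro sets.finite_INT sets.Int) auto
  ultimately show ?thesis
    by simp
qed

lemma continuous_periodic_bounded:
  assumes "continuous_on UNIV g" "periodic g"
  shows "bounded (range g)"
proof -
  have "cube \<subseteq> cbox 0 (1 :: real^'d)"
    unfolding cube_def by (auto simp: mem_box_cart less_imp_le)
  then have "range g \<subseteq> g ` cbox 0 1"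
    using periodic_frac_vec[OF assms(2)] frac_vec_in_cube by (metis image_eqI image_subset_iff subsetD)
  moreover have "compact (g ` cbox 0 1)"
    using assms(1) by (intro compact_continuous_image) (auto intro: continuous_on_subset)
  ultimately show ?thesis
    using compact_imp_bounded bounded_subset by blast
qed

lemma bmeas_torusI:
  assumes "periodic g" "g \<in> borel_measurable borel" "\<And>x. \<bar>g x\<bar> \<le> B"
  shows "bmeas_torus g"
  using assms unfolding bmeas_torus_def bounded_iff by auto

lemma abs_le_supnorm:
  assumes "bmeas_torus g"
  shows "\<bar>g x\<bar> \<le> supnorm g"
proof -
  obtain B where "\<forall>y\<in>range g. norm y \<le> B"
    using assms unfolding bmeas_torus_def bounded_iff by blast
  then have "bdd_above (range (\<lambda>x. \<bar>g x\<bar>))"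
    by (intro bdd_aboveI2[where M=B]) auto
  then show ?thesis
    unfolding supnorm_def by (metis UNIV_I cSUP_upper)
qed

lemma supnorm_nonneg: "bmeas_torus g \<Longrightarrow> 0 \<le> supnorm g"
  using abs_le_supnorm[of g 0] by linarith

lemma bmeas_torus_integrable:
  assumes "finite_measure M" "sets M = sets borel" "bmeas_torus g"
  shows "integrable M g"
proof (rule finite_measure.integrable_const_bound[OF assms(1)])
  show "AE x in M. norm (g x) \<le> supnorm g"
    using abs_le_supnorm[OF assms(3)] by simp
  show "g \<in> borel_measurable M"
    using assms(2,3) measurable_cong_sets unfolding bmeas_torus_def by blast
qed

lemma bmeas_torus_const: "bmeas_torus (\<lambda>_. c)"
  by (rule bmeas_torusI[where B="\<bar>c\<bar>"]) (auto simp: periodic_def)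

lemma bmeas_torus_add:
  assumes "bmeas_torus g" "bmeas_torus h"
  shows "bmeas_torus (\<lambda>x. g x + h x)"
proof (rule bmeas_torusI)
  show "periodic (\<lambda>x. g x + h x)" "(\<lambda>x. g x + h x) \<in> borel_measurable borel"
    using assms by (auto simp: bmeas_torus_def periodic_def)
  show "\<bar>g x + h x\<bar> \<le> supnorm g + supnorm h" for x
    using abs_le_supnorm[OF assms(1), of x] abs_le_supnorm[OF assms(2), of x] by linarith
qed

lemma bmeas_torus_cmult:
  assumes "bmeas_torus g"
  shows "bmeas_torus (\<lambda>x. c * g x)"
proof (rule bmeas_torusI)
  show "periodic (\<lambda>x. c * g x)" "(\<lambda>x. c * g x) \<in> borel_measurable borel"
    using assms by (auto simp: bmeas_torus_def periodic_def)
  show "\<bar>c * g x\<bar> \<le> \<bar>c\<bar> * supnorm g" for x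
    using abs_le_supnorm[OF assms] by (simp add: abs_mult mult_left_mono)
qed

lemma bmeas_torus_sum:
  "finite I \<Longrightarrow> (\<And>i. i \<in> I \<Longrightarrow> bmeas_torus (f i)) \<Longrightarrow> bmeas_torus (\<lambda>x. \<Sum>i\<in>I. f i x)"
  by (induction I rule: finite_induct) (auto intro: bmeas_torus_add bmeas_torus_const)

lemma bmeas_torus_diff:
  assumes "bmeas_torus g" "bmeas_torus h"
  shows "bmeas_torus (\<lambda>x. g x - h x)"
  using bmeas_torus_add[OF assms(1) bmeas_torus_cmult[OF assms(2), of "-1"]] by simp

lemma bmeas_torus_abs:
  assumes "bmeas_torus g"
  shows "bmeas_torus (\<lambda>x. \<bar>g x\<bar>)"
proof (rule bmeas_torusI)
  show "periodic (\<lambda>x. \<bar>g x\<bar>)" "(\<lambda>x. \<bar>g x\<bar>) \<in> borel_measurable borel"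
    using assms by (auto simp: bmeas_torus_def periodic_def)
  show "\<bar>\<bar>g x\<bar>\<bar> \<le> supnorm g" for x
    using abs_le_supnorm[OF assms] by simp
qed

lemma bmeas_torus_frac_vec_comp:
  assumes "u \<in> borel_measurable borel" "\<And>x. \<bar>u x\<bar> \<le> B"
  shows "bmeas_torus (\<lambda>x. u (frac_vec x))"
proof (rule bmeas_torusI[OF periodic_frac_vec_comp])
  show "(\<lambda>x. u (frac_vec x)) \<in> borel_measurable borel"
    using measurable_comp[OF borel_measurable_frac_vec assms(1)] by (simp add: comp_def)
qed (use assms(2) in blast)

definition torus_indicator :: "(real^'d::finite) set \<Rightarrow> real^'d \<Rightarrow> real" where
  "torus_indicator A x = indicator A (frac_vec x)"

lemma bmeas_torus_indicator: "A \<in> sets borel \<Longrightarrow> bmeas_torus (torus_indicator A)"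
  unfolding torus_indicator_def by (rule bmeas_torus_frac_vec_comp[where B=1]) auto

lemma torus_prob_finite_measure: "torus_prob \<mu> \<Longrightarrow> finite_measure \<mu>"
  unfolding torus_prob_def using prob_space.finite_measure by blast

lemma torus_prob_sets: "torus_prob \<mu> \<Longrightarrow> sets \<mu> = sets borel"
  unfolding torus_prob_def by blast

lemma torus_prob_space: "torus_prob \<mu> \<Longrightarrow> space \<mu> = UNIV"
  using sets_eq_imp_space_eq[OF torus_prob_sets] by simp

lemma torus_prob_borel_measurable_iff:
  "torus_prob \<mu> \<Longrightarrow> f \<in> borel_measurable \<mu> \<longleftrightarrow> f \<in> borel_measurable borel"
  using measurable_cong_sets[OF torus_prob_sets refl] by blast

lemma torus_prob_integrable_bounded:
  fixes u :: "real^'d::finite \<Rightarrow> real"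
  assumes \<mu>: "torus_prob \<mu>" and u: "u \<in> borel_measurable borel" "\<And>x. \<bar>u x\<bar> \<le> B"
  shows "integrable \<mu> u"
proof (rule finite_measure.integrable_const_bound[OF torus_prob_finite_measure[OF \<mu>]])
  show "AE x in \<mu>. norm (u x) \<le> B"
    using u(2) by simp
  show "u \<in> borel_measurable \<mu>"
    using u(1) by (simp add: torus_prob_borel_measurable_iff[OF \<mu>])
qed

lemma torus_prob_integrable: "torus_prob \<mu> \<Longrightarrow> bmeas_torus g \<Longrightarrow> integrable \<mu> g"
  using bmeas_torus_integrable torus_prob_finite_measure torus_prob_sets by blast

lemma torus_prob_measure_space: "torus_prob \<mu> \<Longrightarrow> measure \<mu> (space \<mu>) = 1"
  unfolding torus_prob_def using prob_space.prob_space by blast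

lemma torus_prob_integral_const: "torus_prob \<mu> \<Longrightarrow> integral\<^sup>L \<mu> (\<lambda>_. c :: real) = c"
  by (simp add: torus_prob_measure_space)

lemma torus_prob_measure_eq_indicator:
  assumes \<mu>: "torus_prob \<mu>" and A: "A \<in> sets borel"
  shows "measure \<mu> A = integral\<^sup>L \<mu> (torus_indicator A)"
proof -
  interpret prob_space \<mu>
    using \<mu> unfolding torus_prob_def by blast
  have "prob cube = 1"
    using \<mu> unfolding torus_prob_def measure_def by simp
  then have "AE x in \<mu>. x \<in> cube"
    by (rule AE_prob_1)
  then have "AE x in \<mu>. indicator A x = torus_indicator A x"
    unfolding torus_indicator_def by eventually_elim (simp add: frac_vec_cube)
  moreover have "indicator A \<in> borel_measurable \<mu>" "torus_indicator A \<in> borel_measurable \<mu>"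
    using A bmeas_torus_indicator[OF A]
    by (simp_all add: torus_prob_borel_measurable_iff[OF \<mu>] bmeas_torus_def)
  ultimately have "integral\<^sup>L \<mu> (indicator A) = integral\<^sup>L \<mu> (torus_indicator A)"
    by (intro integral_cong_AE) auto
  then show ?thesis
    using torus_prob_space[OF \<mu>] by simp
qed

lemma torus_prob_eqI:
  assumes \<mu>: "torus_prob \<mu>" and \<nu>: "torus_prob \<nu>"
    and eq: "\<And>g. bmeas_torus g \<Longrightarrow> integral\<^sup>L \<mu> g = integral\<^sup>L \<nu> g"
  shows "\<mu> = \<nu>"
proof (rule measure_eqI)
  show sets_eq: "sets \<mu> = sets \<nu>"
    using torus_prob_sets[OF \<mu>] torus_prob_sets[OF \<nu>] by simp
  fix A assume "A \<in> sets \<mu>"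
  then have A: "A \<in> sets borel"
    using torus_prob_sets[OF \<mu>] by simp
  have "measure \<mu> A = measure \<nu> A"
    using torus_prob_measure_eq_indicator[OF \<mu> A] torus_prob_measure_eq_indicator[OF \<nu> A]
      eq[OF bmeas_torus_indicator[OF A]] by simp
  then show "emeasure \<mu> A = emeasure \<nu> A"
    using finite_measure.emeasure_eq_measure torus_prob_finite_measure \<mu> \<nu> by metis
qed

text \<open>Assumption 6 at a single time step dt; it is applied with n = ceil (T / dt).\<close>

locale minorized_kernel =
  fixes K :: "real \<Rightarrow> real^'d::finite \<Rightarrow> (real^'d) measure" and dt :: real and n :: nat
    and \<alpha> :: real and \<eta> :: "(real^'d) measure"
  assumes kernel: "kernel_torus K" and dt_pos: "0 < dt" and Q_strong_feller: "strong_feller K dt"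
    and torus_prob_eta: "torus_prob \<eta>" and alpha_pos: "0 < \<alpha>" and alpha_less_1: "\<alpha> < 1"
    and n_pos: "0 < n"
    and minorization:
      "\<And>g x. bmeas_torus g \<Longrightarrow> (\<And>x. 0 \<le> g x) \<Longrightarrow> \<alpha> * integral\<^sup>L \<eta> g \<le> (Qop K dt ^^ n) g x"
    and majorization:
      "\<And>g x. bmeas_torus g \<Longrightarrow> (\<And>x. 0 \<le> g x) \<Longrightarrow> (Qop K dt ^^ n) g x \<le> integral\<^sup>L \<eta> g / \<alpha>"
begin

abbreviation Q where "Q \<equiv> Qop K dt"

abbreviation mass where "mass k \<equiv> (Q ^^ k) (\<lambda>_. 1)"

lemma kernel_integrable: "bmeas_torus g \<Longrightarrow> integrable (K dt x) g"
  using kernel dt_pos bmeas_torus_integrable unfolding kernel_torus_def by blast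

lemma Q_bmeas: "bmeas_torus g \<Longrightarrow> bmeas_torus (Q g)"
proof -
  assume g: "bmeas_torus g"
  have cont: "continuous_on UNIV (Q g)"
    using Q_strong_feller g unfolding strong_feller_def by blast
  have per: "periodic (Q g)"
    using kernel dt_pos unfolding periodic_def Qop_def kernel_torus_def by auto
  show ?thesis
    unfolding bmeas_torus_def
    using per continuous_periodic_bounded[OF cont per] borel_measurable_continuous_onI[OF cont] by simp
qed

lemma Qpow_bmeas: "bmeas_torus g \<Longrightarrow> bmeas_torus ((Q ^^ k) g)"
  by (induction k) (auto simp: Q_bmeas)

lemma Q_lincomb:
  assumes "bmeas_torus g" "bmeas_torus h"
  shows "Q (\<lambda>x. a * g x + b * h x) x = a * Q g x + b * Q h x"
  unfolding Qop_def using kernel_integrable assms by simp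

lemma Q_mono:
  assumes "bmeas_torus g" "bmeas_torus h" "\<And>x. g x \<le> h x"
  shows "Q g x \<le> Q h x"
  unfolding Qop_def using kernel_integrable assms by (simp add: integral_mono)

lemma Qpow_lincomb:
  assumes "bmeas_torus g" "bmeas_torus h"
  shows "(Q ^^ k) (\<lambda>x. a * g x + b * h x) x = a * (Q ^^ k) g x + b * (Q ^^ k) h x"
proof (induction k arbitrary: x)
  case (Suc k)
  then have "(Q ^^ k) (\<lambda>x. a * g x + b * h x) = (\<lambda>x. a * (Q ^^ k) g x + b * (Q ^^ k) h x)"
    by (simp add: fun_eq_iff)
  then show ?case
    using Q_lincomb[OF Qpow_bmeas[OF assms(1)] Qpow_bmeas[OF assms(2)]] by simp
qed simp

lemma Qpow_diff:
  "bmeas_torus g \<Longrightarrow> bmeas_torus h \<Longrightarrow> (Q ^^ k) (\<lambda>x. g x - h x) x = (Q ^^ k) g x - (Q ^^ k) h x"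
  using Qpow_lincomb[of g h k 1 "-1"] by simp

lemma Qpow_cmult: "bmeas_torus g \<Longrightarrow> (Q ^^ k) (\<lambda>x. c * g x) x = c * (Q ^^ k) g x"
  using Qpow_lincomb[of g g k c 0] by simp

lemma Qpow_const: "(Q ^^ k) (\<lambda>_. c) x = c * mass k x"
  using Qpow_cmult[OF bmeas_torus_const, of k c 1] by simp

lemma Qpow_mono:
  assumes "bmeas_torus g" "bmeas_torus h" "\<And>x. g x \<le> h x"
  shows "(Q ^^ k) g x \<le> (Q ^^ k) h x"
proof (induction k arbitrary: x)
  case (Suc k)
  then show ?case
    using Q_mono[OF Qpow_bmeas[OF assms(1)] Qpow_bmeas[OF assms(2)]] by simp
qed (simp add: assms(3))

lemma Qpow_nonneg:
  assumes "bmeas_torus g" "\<And>x. 0 \<le> g x"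
  shows "0 \<le> (Q ^^ k) g x"
  using Qpow_mono[OF bmeas_torus_const assms(1), of 0 k x] assms(2) Qpow_const[of k 0 x] by simp

lemma Qpow_Qpow: "(Q ^^ j) ((Q ^^ k) g) = (Q ^^ (j + k)) g"
  by (simp add: funpow_add)

lemma mass_bmeas: "bmeas_torus (mass k)"
  by (rule Qpow_bmeas[OF bmeas_torus_const])

lemma mass_nonneg: "0 \<le> mass k x"
  by (rule Qpow_nonneg[OF bmeas_torus_const]) simp

lemma eta_integrable: "bmeas_torus g \<Longrightarrow> integrable \<eta> g"
  by (rule torus_prob_integrable[OF torus_prob_eta])

lemma alpha_pow_le_mass: "\<alpha> ^ i \<le> mass (i * n) x"
proof (induction i arbitrary: x)
  case (Suc i)
  have "integral\<^sup>L \<eta> (\<lambda>_. \<alpha> ^ i) \<le> integral\<^sup>L \<eta> (mass (i * n))"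
    by (intro integral_mono eta_integrable bmeas_torus_const mass_bmeas Suc.IH)
  then have "\<alpha> ^ i \<le> integral\<^sup>L \<eta> (mass (i * n))"
    by (simp only: torus_prob_integral_const[OF torus_prob_eta])
  then have "\<alpha> * \<alpha> ^ i \<le> \<alpha> * integral\<^sup>L \<eta> (mass (i * n))"
    using alpha_pos by simp
  also have "\<dots> \<le> (Q ^^ n) (mass (i * n)) x"
    by (rule minorization[OF mass_bmeas mass_nonneg])
  also have "\<dots> = mass (Suc i * n) x"
    by (simp add: Qpow_Qpow)
  finally show ?case
    by simp
qed simp

text \<open>The minorization only controls multiples of n steps; the remaining r < n steps are
  absorbed through mass n = Q^r (mass (n - r)) \<le> B * mass r.\<close>

lemma mass_pos: "\<exists>c>0. \<forall>x. c \<le> mass k x"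
proof -
  define i r where "i = k div n" and "r = k mod n"
  have k: "k = i * n + r" and "r < n"
    unfolding i_def r_def using n_pos by simp_all
  define B where "B = supnorm (mass (n - r))"
  have le: "\<alpha> \<le> B * mass r x" for x
  proof -
    have "\<alpha> \<le> mass n x"
      using alpha_pow_le_mass[of 1 x] by simp
    also have "\<dots> = (Q ^^ r) (mass (n - r)) x"
      using \<open>r < n\<close> by (simp add: Qpow_Qpow)
    also have "\<dots> \<le> (Q ^^ r) (\<lambda>_. B) x"
      unfolding B_def using abs_le_supnorm[OF mass_bmeas]
      by (intro Qpow_mono mass_bmeas bmeas_torus_const) (meson abs_le_D1)
    also have "\<dots> = B * mass r x"
      by (rule Qpow_const)
    finally show ?thesis .
  qed
  have "0 < B * mass r 0"
    using le[of 0] alpha_pos by linarith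
  then have B: "0 < B"
    using mass_nonneg[of r 0] by (simp add: zero_less_mult_iff)
  have r: "\<alpha> / B \<le> mass r x" for x
    using le[of x] B by (simp add: pos_divide_le_eq mult.commute)
  have "\<alpha> / B * \<alpha> ^ i \<le> mass k x" for x
  proof -
    have "\<alpha> / B * \<alpha> ^ i \<le> \<alpha> / B * mass (i * n) x"
      using alpha_pow_le_mass alpha_pos B by (intro mult_left_mono) auto
    also have "\<dots> = (Q ^^ (i * n)) (\<lambda>_. \<alpha> / B) x"
      by (rule Qpow_const[symmetric])
    also have "\<dots> \<le> (Q ^^ (i * n)) (mass r) x"
      using r by (intro Qpow_mono bmeas_torus_const mass_bmeas)
    also have "\<dots> = mass k x"
      by (simp add: Qpow_Qpow k)
    finally show ?thesis .
  qed
  moreover have "0 < \<alpha> / B * \<alpha> ^ i"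
    using alpha_pos B by simp
  ultimately show ?thesis
    by blast
qed

lemma integral_mass_pos:
  assumes "torus_prob \<mu>"
  shows "0 < integral\<^sup>L \<mu> (mass k)"
proof -
  obtain c where "0 < c" "\<And>x. c \<le> mass k x"
    using mass_pos by blast
  then have "integral\<^sup>L \<mu> (\<lambda>_. c) \<le> integral\<^sup>L \<mu> (mass k)"
    by (intro integral_mono torus_prob_integrable[OF assms] bmeas_torus_const mass_bmeas)
  then have "c \<le> integral\<^sup>L \<mu> (mass k)"
    by (simp only: torus_prob_integral_const[OF assms])
  with \<open>0 < c\<close> show ?thesis
    by simp
qed

definition ratio_between :: "nat \<Rightarrow> (real^'d \<Rightarrow> real) \<Rightarrow> real \<Rightarrow> real \<Rightarrow> bool" where
  "ratio_between k g m M \<longleftrightarrow> (\<forall>x. m * mass k x \<le> (Q ^^ k) g x \<and> (Q ^^ k) g x \<le> M * mass k x)"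

lemma ratio_between_shift:
  assumes g: "bmeas_torus g" and between: "ratio_between k g m M"
  shows "ratio_between (j + k) g m M"
  unfolding ratio_between_def
proof
  fix x
  have "m * mass (j + k) x = (Q ^^ j) (\<lambda>y. m * mass k y) x"
    by (simp add: Qpow_cmult mass_bmeas Qpow_Qpow)
  also have "\<dots> \<le> (Q ^^ (j + k)) g x"
    using between unfolding ratio_between_def Qpow_Qpow[symmetric]
    by (intro Qpow_mono bmeas_torus_cmult mass_bmeas Qpow_bmeas g) simp
  finally have lower: "m * mass (j + k) x \<le> (Q ^^ (j + k)) g x" .
  have "(Q ^^ (j + k)) g x \<le> (Q ^^ j) (\<lambda>y. M * mass k y) x"
    using between unfolding ratio_between_def Qpow_Qpow[symmetric]
    by (intro Qpow_mono bmeas_torus_cmult mass_bmeas Qpow_bmeas g) simp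
  also have "\<dots> = M * mass (j + k) x"
    by (simp add: Qpow_cmult mass_bmeas Qpow_Qpow)
  finally show "m * mass (j + k) x \<le> (Q ^^ (j + k)) g x \<and> (Q ^^ (j + k)) g x \<le> M * mass (j + k) x"
    using lower by simp
qed

text \<open>Comparing with \<eta> twice, for w and for mass k, bounds Q^n w from below relative to
  mass (n + k), at the price of a factor \<alpha>^2.\<close>

lemma minorization_relative:
  assumes "bmeas_torus w" "\<And>x. 0 \<le> w x"
  shows "\<alpha>\<^sup>2 * (integral\<^sup>L \<eta> w / integral\<^sup>L \<eta> (mass k)) * mass (n + k) x \<le> (Q ^^ n) w x"
proof -
  define a e where "a = integral\<^sup>L \<eta> w" and "e = integral\<^sup>L \<eta> (mass k)"
  have e: "0 < e"
    unfolding e_def by (rule integral_mass_pos[OF torus_prob_eta])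
  have a: "0 \<le> a"
    unfolding a_def using assms(2) by (simp add: integral_nonneg_AE)
  have "mass (n + k) x \<le> e / \<alpha>"
    using majorization[OF mass_bmeas mass_nonneg, of k x] unfolding e_def Qpow_Qpow .
  then have "\<alpha>\<^sup>2 * (a / e) * mass (n + k) x \<le> \<alpha>\<^sup>2 * (a / e) * (e / \<alpha>)"
    using a e by (intro mult_left_mono) auto
  also have "\<dots> = \<alpha> * a"
    using e alpha_pos by (simp add: field_simps power2_eq_square)
  also have "\<dots> \<le> (Q ^^ n) w x"
    unfolding a_def by (rule minorization[OF assms])
  finally show ?thesis
    unfolding a_def e_def .
qed

lemma ratio_between_contract:
  assumes g: "bmeas_torus g" and between: "ratio_between k g m M"
  shows "\<exists>m' M'. ratio_between (n + k) g m' M' \<and> M' - m' = (1 - \<alpha>\<^sup>2) * (M - m)"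
proof -
  define lo hi where "lo = (\<lambda>x. (Q ^^ k) g x - m * mass k x)"
    and "hi = (\<lambda>x. M * mass k x - (Q ^^ k) g x)"
  define e where "e = integral\<^sup>L \<eta> (mass k)"
  have e: "0 < e"
    unfolding e_def by (rule integral_mass_pos[OF torus_prob_eta])
  have bmeas: "bmeas_torus lo" "bmeas_torus hi"
    unfolding lo_def hi_def
    by (intro bmeas_torus_diff bmeas_torus_cmult Qpow_bmeas g mass_bmeas)+
  have nonneg: "0 \<le> lo x" "0 \<le> hi x" for x
    using between unfolding ratio_between_def lo_def hi_def by auto
  have sum: "integral\<^sup>L \<eta> lo + integral\<^sup>L \<eta> hi = (M - m) * e"
    unfolding lo_def hi_def e_def
    using eta_integrable[OF Qpow_bmeas[OF g]] eta_integrable[OF mass_bmeas]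
    by (simp add: algebra_simps)
  have Q_lo: "(Q ^^ n) lo x = (Q ^^ (n + k)) g x - m * mass (n + k) x"
    and Q_hi: "(Q ^^ n) hi x = M * mass (n + k) x - (Q ^^ (n + k)) g x" for x
    unfolding lo_def hi_def
    by (simp_all add: Qpow_diff Qpow_cmult Qpow_bmeas g bmeas_torus_cmult mass_bmeas Qpow_Qpow)
  define m' M' where "m' = m + \<alpha>\<^sup>2 * (integral\<^sup>L \<eta> lo / e)"
    and "M' = M - \<alpha>\<^sup>2 * (integral\<^sup>L \<eta> hi / e)"
  have "ratio_between (n + k) g m' M'"
    unfolding ratio_between_def
  proof
    fix x
    show "m' * mass (n + k) x \<le> (Q ^^ (n + k)) g x \<and> (Q ^^ (n + k)) g x \<le> M' * mass (n + k) x"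
      using minorization_relative[OF bmeas(1) nonneg(1), of k x]
        minorization_relative[OF bmeas(2) nonneg(2), of k x]
      unfolding m'_def M'_def Q_lo Q_hi e_def by (simp add: algebra_simps)
  qed
  moreover have "M' - m' = (M - m) - \<alpha>\<^sup>2 * (integral\<^sup>L \<eta> lo / e + integral\<^sup>L \<eta> hi / e)"
    unfolding m'_def M'_def by (simp add: algebra_simps)
  moreover have "integral\<^sup>L \<eta> lo / e + integral\<^sup>L \<eta> hi / e = M - m"
    using sum e by (simp add: add_divide_distrib[symmetric])
  ultimately show ?thesis
    by (metis left_diff_distrib mult_1)
qed

lemma ratio_between_geometric:
  assumes g: "bmeas_torus g"
  shows "\<exists>m M. ratio_between k g m M \<and> M - m = 2 * supnorm g * (1 - \<alpha>\<^sup>2) ^ (k div n)"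
proof -
  have "\<exists>m M. ratio_between (i * n) g m M \<and> M - m = 2 * supnorm g * (1 - \<alpha>\<^sup>2) ^ i" for i
  proof (induction i)
    case 0
    have "ratio_between 0 g (- supnorm g) (supnorm g)"
      using abs_le_supnorm[OF g] by (auto simp: ratio_between_def abs_le_iff minus_le_iff)
    then show ?case
      by force
  next
    case (Suc i)
    then obtain m M where "ratio_between (i * n) g m M" "M - m = 2 * supnorm g * (1 - \<alpha>\<^sup>2) ^ i"
      by blast
    with ratio_between_contract[OF g] show ?case
      by (metis (no_types, opaque_lifting) mult.left_commute mult_Suc power_Suc)
  qed
  then obtain m M where "ratio_between (k div n * n) g m M"
    and "M - m = 2 * supnorm g * (1 - \<alpha>\<^sup>2) ^ (k div n)"
    by blast
  moreover have "k = k mod n + k div n * n"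
    by simp
  ultimately show ?thesis
    using ratio_between_shift[OF g] by metis
qed

lemma Phi_between:
  assumes \<mu>: "torus_prob \<mu>" and g: "bmeas_torus g" and between: "ratio_between k g m M"
  shows "m \<le> Phi K dt k \<mu> g" and "Phi K dt k \<mu> g \<le> M"
proof -
  define e where "e = integral\<^sup>L \<mu> (mass k)"
  have e: "0 < e"
    unfolding e_def by (rule integral_mass_pos[OF \<mu>])
  have "integral\<^sup>L \<mu> (\<lambda>x. m * mass k x) \<le> integral\<^sup>L \<mu> ((Q ^^ k) g)"
    and "integral\<^sup>L \<mu> ((Q ^^ k) g) \<le> integral\<^sup>L \<mu> (\<lambda>x. M * mass k x)"
    using between unfolding ratio_between_def
    by (intro integral_mono torus_prob_integrable[OF \<mu>] bmeas_torus_cmult mass_bmeas Qpow_bmeas g;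
        simp)+
  then have "m * e \<le> integral\<^sup>L \<mu> ((Q ^^ k) g)" "integral\<^sup>L \<mu> ((Q ^^ k) g) \<le> M * e"
    unfolding e_def by simp_all
  then show "m \<le> Phi K dt k \<mu> g" "Phi K dt k \<mu> g \<le> M"
    unfolding Phi_def e_def[symmetric] using e by (simp_all add: pos_le_divide_eq pos_divide_le_eq)
qed

lemma Phi_invariant:
  assumes \<nu>: "torus_prob \<nu>" and inv: "FK_invariant K dt \<nu>" and g: "bmeas_torus g"
  shows "Phi K dt k \<nu> g = integral\<^sup>L \<nu> g"
proof -
  define lam where "lam = integral\<^sup>L \<nu> (Q (\<lambda>_. 1))"
  have lam: "0 < lam"
    using integral_mass_pos[OF \<nu>, of 1] by (simp add: lam_def)
  have step: "integral\<^sup>L \<nu> (Q h) = lam * integral\<^sup>L \<nu> h" if "bmeas_torus h" for h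
    using inv that lam unfolding FK_invariant_def Phi_def lam_def by (simp add: divide_eq_eq mult.commute)
  have iter: "integral\<^sup>L \<nu> ((Q ^^ j) h) = lam ^ j * integral\<^sup>L \<nu> h" if "bmeas_torus h" for h j
    by (induction j) (simp_all add: step Qpow_bmeas that)
  show ?thesis
    unfolding Phi_def using iter[OF g] iter[OF bmeas_torus_const] lam torus_prob_measure_space[OF \<nu>]
    by simp
qed

lemma Phi_oscillation:
  assumes \<mu>: "torus_prob \<mu>" and \<mu>': "torus_prob \<mu>'" and g: "bmeas_torus g" and "k \<le> j"
  shows "\<bar>Phi K dt j \<mu> g - Phi K dt k \<mu>' g\<bar> \<le> 2 * supnorm g * (1 - \<alpha>\<^sup>2) ^ (k div n)"
proof -
  obtain m M where between: "ratio_between k g m M"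
    and width: "M - m = 2 * supnorm g * (1 - \<alpha>\<^sup>2) ^ (k div n)"
    using ratio_between_geometric[OF g] by blast
  have "ratio_between j g m M"
    using ratio_between_shift[OF g between, of "j - k"] \<open>k \<le> j\<close> by simp
  then have "m \<le> Phi K dt j \<mu> g" "Phi K dt j \<mu> g \<le> M"
    by (rule Phi_between[OF \<mu> g])+
  moreover have "m \<le> Phi K dt k \<mu>' g" "Phi K dt k \<mu>' g \<le> M"
    by (rule Phi_between[OF \<mu>' g between])+
  ultimately show ?thesis
    unfolding abs_le_iff using width by linarith
qed

lemma Phi_dist_invariant:
  assumes "torus_prob \<mu>" "torus_prob \<nu>" "FK_invariant K dt \<nu>" "bmeas_torus g"
  shows "\<bar>Phi K dt k \<mu> g - integral\<^sup>L \<nu> g\<bar> \<le> 2 * supnorm g * (1 - \<alpha>\<^sup>2) ^ (k div n)"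
  using Phi_oscillation[OF assms(1,2,4) order_refl] Phi_invariant[OF assms(2-4)] by simp

lemma contraction_factor: "0 < 1 - \<alpha>\<^sup>2" "1 - \<alpha>\<^sup>2 < 1"
  using alpha_pos alpha_less_1 by (simp_all add: abs_square_less_1)

definition Phi_limit :: "(real^'d \<Rightarrow> real) \<Rightarrow> real" where
  "Phi_limit g = lim (\<lambda>k. Phi K dt k \<eta> g)"

lemma LIMSEQ_Phi_limit:
  assumes g: "bmeas_torus g"
  shows "(\<lambda>k. Phi K dt k \<eta> g) \<longlonglongrightarrow> Phi_limit g"
proof -
  define q where "q = 1 - \<alpha>\<^sup>2"
  have osc: "\<bar>Phi K dt j \<eta> g - Phi K dt k \<eta> g\<bar> \<le> 2 * supnorm g * q ^ (min j k div n)" for j k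
    using Phi_oscillation[OF torus_prob_eta torus_prob_eta g, of k j]
      Phi_oscillation[OF torus_prob_eta torus_prob_eta g, of j k]
    unfolding q_def by (cases "k \<le> j") (auto simp: abs_minus_commute min_def)
  have "Cauchy (\<lambda>k. Phi K dt k \<eta> g)"
  proof (rule metric_CauchyI)
    fix \<epsilon> :: real
    assume "0 < \<epsilon>"
    have "(\<lambda>i. 2 * supnorm g * q ^ i) \<longlonglongrightarrow> 0"
      using contraction_factor unfolding q_def by (intro tendsto_mult_right_zero LIMSEQ_power_zero) simp
    then obtain N where N: "2 * supnorm g * q ^ N < \<epsilon>"
      using order_tendstoD(2)[OF _ \<open>0 < \<epsilon>\<close>] eventually_sequentially by (metis order_refl)
    have "dist (Phi K dt j \<eta> g) (Phi K dt k \<eta> g) < \<epsilon>" if "N * n \<le> j" "N * n \<le> k" for j k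
    proof -
      have "N * n \<le> min j k"
        using that by simp
      then have "N \<le> min j k div n"
        using div_le_mono[of "N * n" "min j k" n] n_pos by simp
      then have "q ^ (min j k div n) \<le> q ^ N"
        using contraction_factor unfolding q_def by (simp add: power_decreasing less_imp_le)
      then have "2 * supnorm g * q ^ (min j k div n) \<le> 2 * supnorm g * q ^ N"
        using supnorm_nonneg[OF g] by (simp add: mult_left_mono)
      then show ?thesis
        using osc[of j k] N by (simp add: dist_real_def)
    qed
    then show "\<exists>M. \<forall>j\<ge>M. \<forall>k\<ge>M. dist (Phi K dt j \<eta> g) (Phi K dt k \<eta> g) < \<epsilon>"
      by blast
  qed
  then show ?thesis
    unfolding Phi_limit_def using Cauchy_convergent convergent_LIMSEQ_iff by blast
qed

lemma Phi_lincomb: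
  assumes \<mu>: "torus_prob \<mu>" and g: "bmeas_torus g" and h: "bmeas_torus h"
  shows "Phi K dt k \<mu> (\<lambda>x. a * g x + b * h x) = a * Phi K dt k \<mu> g + b * Phi K dt k \<mu> h"
proof -
  have "(Q ^^ k) (\<lambda>x. a * g x + b * h x) = (\<lambda>x. a * (Q ^^ k) g x + b * (Q ^^ k) h x)"
    using Qpow_lincomb[OF g h] by (simp add: fun_eq_iff)
  then show ?thesis
    unfolding Phi_def
    using torus_prob_integrable[OF \<mu> Qpow_bmeas[OF g]] torus_prob_integrable[OF \<mu> Qpow_bmeas[OF h]]
    by (simp add: add_divide_distrib)
qed

lemma Phi_const:
  assumes "torus_prob \<mu>"
  shows "Phi K dt k \<mu> (\<lambda>_. c) = c"
  using Phi_lincomb[OF assms bmeas_torus_const bmeas_torus_const, of k c 1 0 0]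
    integral_mass_pos[OF assms, of k]
  unfolding Phi_def by simp

lemma Phi_nonneg:
  assumes "torus_prob \<mu>" "bmeas_torus g" "\<And>x. 0 \<le> g x"
  shows "0 \<le> Phi K dt k \<mu> g"
proof -
  have "0 \<le> integral\<^sup>L \<mu> ((Q ^^ k) g)"
    using Qpow_nonneg[OF assms(2,3)] by (simp add: integral_nonneg_AE)
  then show ?thesis
    unfolding Phi_def using integral_mass_pos[OF assms(1), of k] by simp
qed

lemma Phi_limit_lincomb:
  assumes g: "bmeas_torus g" and h: "bmeas_torus h"
  shows "Phi_limit (\<lambda>x. a * g x + b * h x) = a * Phi_limit g + b * Phi_limit h"
proof -
  have "(\<lambda>k. Phi K dt k \<eta> (\<lambda>x. a * g x + b * h x)) \<longlonglongrightarrow> a * Phi_limit g + b * Phi_limit h"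
    unfolding Phi_lincomb[OF torus_prob_eta g h] by (intro tendsto_intros LIMSEQ_Phi_limit g h)
  then show ?thesis
    using LIMSEQ_Phi_limit[OF bmeas_torus_add[OF bmeas_torus_cmult[OF g] bmeas_torus_cmult[OF h]]]
      LIMSEQ_unique by blast
qed

lemma Phi_limit_add:
  "bmeas_torus g \<Longrightarrow> bmeas_torus h \<Longrightarrow> Phi_limit (\<lambda>x. g x + h x) = Phi_limit g + Phi_limit h"
  using Phi_limit_lincomb[of g h 1 1] by simp

lemma Phi_limit_diff:
  "bmeas_torus g \<Longrightarrow> bmeas_torus h \<Longrightarrow> Phi_limit (\<lambda>x. g x - h x) = Phi_limit g - Phi_limit h"
  using Phi_limit_lincomb[of g h 1 "-1"] by simp

lemma Phi_limit_cmult: "bmeas_torus g \<Longrightarrow> Phi_limit (\<lambda>x. c * g x) = c * Phi_limit g"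
  using Phi_limit_lincomb[of g g c 0] by simp

lemma Phi_limit_const: "Phi_limit (\<lambda>_. c) = c"
  using LIMSEQ_Phi_limit[OF bmeas_torus_const, of c] LIMSEQ_unique
  unfolding Phi_const[OF torus_prob_eta] by blast

lemma Phi_limit_nonneg:
  assumes "bmeas_torus g" "\<And>x. 0 \<le> g x"
  shows "0 \<le> Phi_limit g"
  using LIMSEQ_le_const[OF LIMSEQ_Phi_limit[OF assms(1)]] Phi_nonneg[OF torus_prob_eta assms]
  by blast

lemma Phi_limit_mono:
  assumes "bmeas_torus g" "bmeas_torus h" "\<And>x. g x \<le> h x"
  shows "Phi_limit g \<le> Phi_limit h"
  using Phi_limit_nonneg[OF bmeas_torus_diff[OF assms(2,1)]] assms(3) Phi_limit_diff[OF assms(2,1)]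
  by simp

lemma Phi_limit_le_integral:
  assumes g: "bmeas_torus g" and nonneg: "\<And>x. 0 \<le> g x"
  shows "Phi_limit g \<le> integral\<^sup>L \<eta> g / \<alpha>\<^sup>2"
proof -
  define c where "c = integral\<^sup>L \<eta> g"
  have c: "0 \<le> c"
    unfolding c_def using nonneg by (simp add: integral_nonneg_AE)
  have "ratio_between (j + n) g 0 (c / \<alpha>\<^sup>2)" for j
    unfolding ratio_between_def
  proof
    fix x
    have "\<alpha> * mass j x = (Q ^^ j) (\<lambda>_. \<alpha>) x"
      by (rule Qpow_const[symmetric])
    also have "\<dots> \<le> mass (j + n) x"
      using alpha_pow_le_mass[of 1] unfolding Qpow_Qpow[symmetric]
      by (intro Qpow_mono bmeas_torus_const mass_bmeas) simp
    finally have mass_growth: "\<alpha> * mass j x \<le> mass (j + n) x" .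
    have "(Q ^^ (j + n)) g x = (Q ^^ j) ((Q ^^ n) g) x"
      by (simp add: Qpow_Qpow)
    also have "\<dots> \<le> (Q ^^ j) (\<lambda>_. c / \<alpha>) x"
      unfolding c_def by (intro Qpow_mono Qpow_bmeas g bmeas_torus_const majorization nonneg)
    also have "\<dots> = c / \<alpha> * mass j x"
      by (rule Qpow_const)
    also have "\<dots> = c / \<alpha>\<^sup>2 * (\<alpha> * mass j x)"
      using alpha_pos by (simp add: power2_eq_square)
    also have "\<dots> \<le> c / \<alpha>\<^sup>2 * mass (j + n) x"
      using c mass_growth by (intro mult_left_mono) auto
    finally have "(Q ^^ (j + n)) g x \<le> c / \<alpha>\<^sup>2 * mass (j + n) x" .
    then show "0 * mass (j + n) x \<le> (Q ^^ (j + n)) g x \<and> (Q ^^ (j + n)) g x \<le> c / \<alpha>\<^sup>2 * mass (j + n) x"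
      using Qpow_nonneg[OF g nonneg] by simp
  qed
  then have "Phi K dt (j + n) \<eta> g \<le> c / \<alpha>\<^sup>2" for j
    by (rule Phi_between(2)[OF torus_prob_eta g])
  then have "\<forall>k\<ge>n. Phi K dt k \<eta> g \<le> c / \<alpha>\<^sup>2"
    by (metis le_add_diff_inverse2)
  then show ?thesis
    unfolding c_def using LIMSEQ_le_const2[OF LIMSEQ_Phi_limit[OF g]] by blast
qed

lemma Phi_limit_Q: "bmeas_torus g \<Longrightarrow> Phi_limit (Q g) = Phi_limit (Q (\<lambda>_. 1)) * Phi_limit g"
proof -
  assume g: "bmeas_torus g"
  have "Phi K dt k \<eta> (Q g) = Phi K dt (Suc k) \<eta> g * Phi K dt k \<eta> (Q (\<lambda>_. 1))" for k
    using integral_mass_pos[OF torus_prob_eta, of "Suc k"]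
    unfolding Phi_def by (simp add: funpow_Suc_right del: funpow.simps)
  then have "(\<lambda>k. Phi K dt k \<eta> (Q g)) \<longlonglongrightarrow> Phi_limit g * Phi_limit (Q (\<lambda>_. 1))"
    by (simp only:) (intro tendsto_mult LIMSEQ_Suc[OF LIMSEQ_Phi_limit[OF g]]
        LIMSEQ_Phi_limit Q_bmeas bmeas_torus_const)
  then show ?thesis
    using LIMSEQ_Phi_limit[OF Q_bmeas[OF g]] LIMSEQ_unique by (metis mult.commute)
qed

text \<open>By monotonicity and the previous lemma, Phi_limit is controlled by the L^1(\<eta>) norm.\<close>

lemma Phi_limit_dominated_convergence:
  assumes h: "\<And>j. bmeas_torus (h j)" and f: "bmeas_torus f"
    and lim: "\<And>x. (\<lambda>j. h j x) \<longlonglongrightarrow> f x"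
    and bound: "\<And>j x. \<bar>h j x\<bar> \<le> B" "\<And>x. \<bar>f x\<bar> \<le> B"
  shows "(\<lambda>j. Phi_limit (h j)) \<longlonglongrightarrow> Phi_limit f"
proof -
  define d where "d j = (\<lambda>x. \<bar>h j x - f x\<bar>)" for j
  have d: "bmeas_torus (d j)" for j
    unfolding d_def by (intro bmeas_torus_abs bmeas_torus_diff h f)
  have est: "\<bar>Phi_limit (h j) - Phi_limit f\<bar> \<le> integral\<^sup>L \<eta> (d j) / \<alpha>\<^sup>2" for j
  proof -
    have "\<bar>Phi_limit (h j) - Phi_limit f\<bar> \<le> Phi_limit (d j)"
      using Phi_limit_mono[OF bmeas_torus_diff[OF h f] d, of j]
        Phi_limit_mono[OF bmeas_torus_diff[OF f h] d, of j]
      by (simp add: Phi_limit_diff h f d_def abs_le_iff)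
    also have "\<dots> \<le> integral\<^sup>L \<eta> (d j) / \<alpha>\<^sup>2"
      by (rule Phi_limit_le_integral[OF d]) (simp add: d_def)
    finally show ?thesis .
  qed
  have "(\<lambda>j. integral\<^sup>L \<eta> (d j)) \<longlonglongrightarrow> integral\<^sup>L \<eta> (\<lambda>_. 0)"
  proof (rule integral_dominated_convergence[where w="\<lambda>_. 2 * B"])
    show "(\<lambda>_. 0::real) \<in> borel_measurable \<eta>" "integrable \<eta> (\<lambda>_. 2 * B)"
      by (simp_all add: eta_integrable[OF bmeas_torus_const])
    show "d j \<in> borel_measurable \<eta>" for j
      using eta_integrable[OF d] by simp
    have "(\<lambda>j. \<bar>h j x - f x\<bar>) \<longlonglongrightarrow> \<bar>f x - f x\<bar>" for x
      by (intro tendsto_intros lim)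
    then show "AE x in \<eta>. (\<lambda>j. d j x) \<longlonglongrightarrow> 0"
      unfolding d_def by simp
    have "norm (d j x) \<le> 2 * B" for j x
      using bound(1)[of j x] bound(2)[of x] unfolding d_def by simp
    then show "AE x in \<eta>. norm (d j x) \<le> 2 * B" for j
      by simp
  qed
  then have "(\<lambda>j. integral\<^sup>L \<eta> (d j) / \<alpha>\<^sup>2) \<longlonglongrightarrow> 0"
    using tendsto_divide[OF _ tendsto_const, of _ 0 sequentially "\<alpha>\<^sup>2"] alpha_pos by simp
  then have "(\<lambda>j. Phi_limit (h j) - Phi_limit f) \<longlonglongrightarrow> 0"
    by (rule Lim_null_comparison[rotated]) (simp add: est)
  then show ?thesis
    by (simp add: LIM_zero_iff)
qed

text \<open>Continuity of Phi_limit under bounded pointwise convergence makes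
  A \<mapsto> Phi_limit (torus_indicator A) countably additive.\<close>

definition limit_measure :: "(real^'d) measure" where
  "limit_measure = measure_of UNIV (sets borel) (\<lambda>A. ennreal (Phi_limit (torus_indicator A)))"

lemma sets_limit_measure: "sets limit_measure = sets borel"
  unfolding limit_measure_def
  by (rule sigma_algebra.sets_measure_of_eq) (use sets.sigma_algebra_axioms[of borel] in simp)

lemma space_limit_measure: "space limit_measure = UNIV"
  unfolding limit_measure_def by simp

lemma Phi_limit_indicator_finite_Union:
  fixes A :: "nat \<Rightarrow> (real^'d) set"
  assumes A: "\<And>i. A i \<in> sets borel" and disj: "disjoint_family A"
  shows "(\<Sum>i<N. Phi_limit (torus_indicator (A i))) = Phi_limit (torus_indicator (\<Union>i<N. A i))"
proof (induction N)
  case 0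
  then show ?case
    using Phi_limit_const[of 0] by (simp add: torus_indicator_def[abs_def])
next
  case (Suc N)
  have "A N \<inter> A i = {}" if "i < N" for i
    using disj that unfolding disjoint_family_on_def by (metis UNIV_I less_irrefl)
  then have "A N \<inter> (\<Union>i<N. A i) = {}"
    by blast
  then have "torus_indicator (\<Union>i<Suc N. A i) =
      (\<lambda>x. torus_indicator (A N) x + torus_indicator (\<Union>i<N. A i) x)"
    unfolding torus_indicator_def lessThan_Suc UN_insert by (intro ext indicator_disj_union)
  then have "Phi_limit (torus_indicator (\<Union>i<Suc N. A i)) =
      Phi_limit (torus_indicator (A N)) + Phi_limit (torus_indicator (\<Union>i<N. A i))"
    using A by (simp add: Phi_limit_add[symmetric] bmeas_torus_indicator sets.finite_UN)
  then show ?case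
    using Suc.IH by simp
qed

lemma countably_additive_Phi_limit_indicator:
  "countably_additive (sets borel) (\<lambda>A. ennreal (Phi_limit (torus_indicator A)))"
  unfolding countably_additive_def
proof (intro allI impI)
  fix A :: "nat \<Rightarrow> (real^'d) set"
  assume "range A \<subseteq> sets borel" and disj: "disjoint_family A" and "(\<Union>i. A i) \<in> sets borel"
  then have A: "\<And>i. A i \<in> sets borel"
    by auto
  have "(\<lambda>N. Phi_limit (torus_indicator (\<Union>i<N. A i))) \<longlonglongrightarrow> Phi_limit (torus_indicator (\<Union>i. A i))"
  proof (rule Phi_limit_dominated_convergence[where B=1])
    show "(\<lambda>N. torus_indicator (\<Union>i<N. A i) x) \<longlonglongrightarrow> torus_indicator (\<Union>i. A i) x" for x
      unfolding torus_indicator_def by (rule LIMSEQ_indicator_UN)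
  qed (use A \<open>(\<Union>i. A i) \<in> sets borel\<close> in \<open>auto intro!: bmeas_torus_indicator simp: torus_indicator_def\<close>)
  then have sums: "(\<lambda>i. Phi_limit (torus_indicator (A i))) sums Phi_limit (torus_indicator (\<Union>i. A i))"
    unfolding sums_def Phi_limit_indicator_finite_Union[OF A disj] .
  have "(\<Sum>i. ennreal (Phi_limit (torus_indicator (A i)))) = ennreal (\<Sum>i. Phi_limit (torus_indicator (A i)))"
    using sums A by (intro suminf_ennreal2 Phi_limit_nonneg bmeas_torus_indicator sums_summable)
      (auto simp: torus_indicator_def)
  also have "\<dots> = ennreal (Phi_limit (torus_indicator (\<Union>i. A i)))"
    using sums sums_unique by metis
  finally show "(\<Sum>i. ennreal (Phi_limit (torus_indicator (A i)))) =
      ennreal (Phi_limit (torus_indicator (\<Union>i. A i)))" .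
qed

lemma emeasure_limit_measure:
  "A \<in> sets borel \<Longrightarrow> emeasure limit_measure A = ennreal (Phi_limit (torus_indicator A))"
  unfolding limit_measure_def
proof (rule emeasure_measure_of_sigma)
  show "sigma_algebra UNIV (sets (borel :: (real^'d) measure))"
    using sets.sigma_algebra_axioms[of borel] by simp
  show "positive (sets borel) (\<lambda>A. ennreal (Phi_limit (torus_indicator A)))"
    unfolding positive_def torus_indicator_def using Phi_limit_const[of 0] by simp
qed (rule countably_additive_Phi_limit_indicator)

lemma torus_prob_limit_measure: "torus_prob limit_measure"
proof -
  have "emeasure limit_measure UNIV = 1" "emeasure limit_measure cube = 1"
    using emeasure_limit_measure[OF cube_borel] emeasure_limit_measure[of UNIV] Phi_limit_const[of 1]
    by (simp_all add: torus_indicator_def[abs_def] frac_vec_in_cube)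
  then show ?thesis
    unfolding torus_prob_def using prob_spaceI[of limit_measure] sets_limit_measure space_limit_measure
    by simp
qed

lemma integral_limit_measure_indicator:
  assumes "A \<in> sets borel"
  shows "integral\<^sup>L limit_measure (indicator A) = Phi_limit (torus_indicator A)"
  using emeasure_limit_measure[OF assms] Phi_limit_nonneg[OF bmeas_torus_indicator[OF assms]]
  by (simp add: measure_def space_limit_measure torus_indicator_def)

lemma Phi_limit_sum:
  assumes "finite I" "\<And>i. i \<in> I \<Longrightarrow> bmeas_torus (f i)"
  shows "Phi_limit (\<lambda>x. \<Sum>i\<in>I. f i x) = (\<Sum>i\<in>I. Phi_limit (f i))"
  using assms
proof (induction I rule: finite_induct)
  case empty
  then show ?case
    using Phi_limit_const[of 0] by simp
next
  case (insert j I)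
  have "bmeas_torus (\<lambda>x. \<Sum>i\<in>I. f i x)"
    using insert.prems insert.hyps(1) by (intro bmeas_torus_sum) auto
  then show ?case
    using insert by (simp add: Phi_limit_add)
qed

lemma Phi_limit_frac_vec_comp_simple:
  assumes s: "simple_function limit_measure s"
  shows "Phi_limit (\<lambda>x. s (frac_vec x)) = integral\<^sup>L limit_measure s"
proof -
  define R A where "R = s ` space limit_measure" and "A y = s -` {y} \<inter> space limit_measure" for y
  have R: "finite R"
    unfolding R_def using simple_functionD(1)[OF s] .
  have A: "A y \<in> sets borel" for y
    unfolding A_def using simple_functionD(2)[OF s] sets_limit_measure by simp
  have repr: "s x = (\<Sum>y\<in>R. y * indicator (A y) x)" for x
  proof -
    have "s x = (\<Sum>y\<in>R. indicator (A y) x *\<^sub>R y)"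
      unfolding R_def A_def
      by (rule simple_function_indicator_representation_banach[OF s]) (simp add: space_limit_measure)
    then show ?thesis
      by (simp only: real_scaleR_def mult.commute)
  qed
  have integrable: "integrable limit_measure (indicator (A y) :: real^'d \<Rightarrow> real)" for y
    using A by (intro torus_prob_integrable_bounded[OF torus_prob_limit_measure, where B=1])
      (auto split: split_indicator)
  have "Phi_limit (\<lambda>x. s (frac_vec x)) = Phi_limit (\<lambda>x. \<Sum>y\<in>R. y * torus_indicator (A y) x)"
    unfolding repr torus_indicator_def ..
  also have "\<dots> = (\<Sum>y\<in>R. Phi_limit (\<lambda>x. y * torus_indicator (A y) x))"
    using R A by (intro Phi_limit_sum bmeas_torus_cmult bmeas_torus_indicator)
  also have "\<dots> = (\<Sum>y\<in>R. y * integral\<^sup>L limit_measure (indicator (A y)))"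
    using A by (simp add: Phi_limit_cmult bmeas_torus_indicator integral_limit_measure_indicator[symmetric])
  also have "\<dots> = integral\<^sup>L limit_measure (\<lambda>x. \<Sum>y\<in>R. y * indicator (A y) x)"
    using integrable by (simp add: integral_sum)
  also have "\<dots> = integral\<^sup>L limit_measure s"
    unfolding repr ..
  finally show ?thesis .
qed

lemma Phi_limit_frac_vec_comp_tendsto:
  fixes U :: "nat \<Rightarrow> real^'d \<Rightarrow> real" and u :: "real^'d \<Rightarrow> real"
  assumes meas: "\<And>i. U i \<in> borel_measurable borel" "u \<in> borel_measurable borel"
    and bound: "\<And>i x. \<bar>U i x\<bar> \<le> B" "\<And>x. \<bar>u x\<bar> \<le> B"
    and conv: "\<And>x. (\<lambda>i. U i x) \<longlonglongrightarrow> u x"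
    and agree: "\<And>i. Phi_limit (\<lambda>x. U i (frac_vec x)) = integral\<^sup>L limit_measure (U i)"
  shows "Phi_limit (\<lambda>x. u (frac_vec x)) = integral\<^sup>L limit_measure u"
proof -
  have "(\<lambda>i. Phi_limit (\<lambda>x. U i (frac_vec x))) \<longlonglongrightarrow> Phi_limit (\<lambda>x. u (frac_vec x))"
  proof (rule Phi_limit_dominated_convergence[where B=B])
    show "bmeas_torus (\<lambda>x. U i (frac_vec x))" for i
      by (rule bmeas_torus_frac_vec_comp[OF meas(1) bound(1)])
    show "bmeas_torus (\<lambda>x. u (frac_vec x))"
      by (rule bmeas_torus_frac_vec_comp[OF meas(2) bound(2)])
  qed (use conv bound in auto)
  moreover have "(\<lambda>i. integral\<^sup>L limit_measure (U i)) \<longlonglongrightarrow> integral\<^sup>L limit_measure u"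
  proof (rule integral_dominated_convergence[where w="\<lambda>_. B"])
    show "integrable limit_measure (\<lambda>_. B)"
      by (rule torus_prob_integrable[OF torus_prob_limit_measure bmeas_torus_const])
  qed (use meas conv bound in \<open>simp_all add: torus_prob_borel_measurable_iff[OF torus_prob_limit_measure]\<close>)
  ultimately have "(\<lambda>i. integral\<^sup>L limit_measure (U i)) \<longlonglongrightarrow> Phi_limit (\<lambda>x. u (frac_vec x))"
    and "(\<lambda>i. integral\<^sup>L limit_measure (U i)) \<longlonglongrightarrow> integral\<^sup>L limit_measure u"
    using agree by simp_all
  then show ?thesis
    by (rule LIMSEQ_unique)
qed

lemma integral_limit_measure:
  assumes g: "bmeas_torus g"
  shows "integral\<^sup>L limit_measure g = Phi_limit g"
proof -
  have meas: "g \<in> borel_measurable borel" and "periodic g"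
    using g unfolding bmeas_torus_def by simp_all
  then have g_frac_vec: "(\<lambda>x. g (frac_vec x)) = g"
    by (simp add: fun_eq_iff periodic_frac_vec)
  obtain F where F: "\<And>i. simple_function limit_measure (F i)"
    "\<And>x. (\<lambda>i. F i x) \<longlonglongrightarrow> g x" "\<And>i x. \<bar>F i x\<bar> \<le> 2 * \<bar>g x\<bar>"
    using borel_measurable_implies_sequence_metric[of g limit_measure 0] meas space_limit_measure
    by (auto simp: torus_prob_borel_measurable_iff[OF torus_prob_limit_measure] dist_real_def)
  have "Phi_limit (\<lambda>x. g (frac_vec x)) = integral\<^sup>L limit_measure g"
  proof (rule Phi_limit_frac_vec_comp_tendsto[where B="2 * supnorm g"])
    show "F i \<in> borel_measurable borel" for i
      using borel_measurable_simple_function[OF F(1)]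
      by (simp add: torus_prob_borel_measurable_iff[OF torus_prob_limit_measure])
    show "\<bar>F i x\<bar> \<le> 2 * supnorm g" "\<bar>g x\<bar> \<le> 2 * supnorm g" for i x
      using F(3)[of i x] abs_le_supnorm[OF g, of x] by linarith+
  qed (use meas F(2) Phi_limit_frac_vec_comp_simple[OF F(1)] in auto)
  then show ?thesis
    unfolding g_frac_vec by simp
qed

lemma FK_invariant_limit_measure: "FK_invariant K dt limit_measure"
  unfolding FK_invariant_def
proof (intro allI impI)
  fix g :: "real^'d \<Rightarrow> real"
  assume g: "bmeas_torus g"
  have pos: "0 < Phi_limit (Q (\<lambda>_. 1))"
    using integral_mass_pos[OF torus_prob_limit_measure, of 1]
      integral_limit_measure[OF Q_bmeas[OF bmeas_torus_const]] by simp
  have "Phi K dt 1 limit_measure g = Phi_limit (Q g) / Phi_limit (Q (\<lambda>_. 1))"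
    unfolding Phi_def
    using integral_limit_measure[OF Q_bmeas[OF g]] integral_limit_measure[OF Q_bmeas[OF bmeas_torus_const]]
    by simp
  also have "\<dots> = Phi_limit g"
    using Phi_limit_Q[OF g] pos by simp
  also have "\<dots> = integral\<^sup>L limit_measure g"
    using integral_limit_measure[OF g] by simp
  finally show "Phi K dt 1 limit_measure g = integral\<^sup>L limit_measure g" .
qed

lemma FK_invariant_unique:
  assumes \<nu>1: "torus_prob \<nu>1" "FK_invariant K dt \<nu>1"
    and \<nu>2: "torus_prob \<nu>2" "FK_invariant K dt \<nu>2"
  shows "\<nu>1 = \<nu>2"
proof (rule torus_prob_eqI[OF \<nu>1(1) \<nu>2(1)])
  fix g :: "real^'d \<Rightarrow> real"
  assume g: "bmeas_torus g"
  have "\<bar>integral\<^sup>L \<nu>1 g - integral\<^sup>L \<nu>2 g\<bar> \<le> 2 * supnorm g * (1 - \<alpha>\<^sup>2) ^ i" for i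
    using Phi_dist_invariant[OF \<nu>1(1) \<nu>2 g, of "i * n"] Phi_invariant[OF \<nu>1 g] n_pos by simp
  moreover have "(\<lambda>i. 2 * supnorm g * (1 - \<alpha>\<^sup>2) ^ i) \<longlonglongrightarrow> 0"
    using contraction_factor by (intro tendsto_mult_right_zero LIMSEQ_power_zero) simp
  ultimately have "\<bar>integral\<^sup>L \<nu>1 g - integral\<^sup>L \<nu>2 g\<bar> \<le> 0"
    using LIMSEQ_le_const by blast
  then show "integral\<^sup>L \<nu>1 g = integral\<^sup>L \<nu>2 g"
    by simp
qed

lemma ex1_FK_invariant: "\<exists>!\<nu>. torus_prob \<nu> \<and> FK_invariant K dt \<nu>"
  using torus_prob_limit_measure FK_invariant_limit_measure FK_invariant_unique by blast

end

text \<open>Geometric decay once every n steps is exponential decay in the time k dt when n dt \<le> c.\<close>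

lemma geometric_le_exp:
  fixes q dt c :: real and n k :: nat
  assumes q: "0 < q" "q < 1" and n: "0 < n" and dt: "0 < dt" and c: "0 < c"
    and n_dt: "real n * dt \<le> c"
  shows "q ^ (k div n) \<le> (1 / q) * exp (- (- ln q / c) * real k * dt)"
proof -
  define m where "m = k div n"
  have "k < n * (m + 1)"
    unfolding m_def using n by (simp add: dividend_less_times_div)
  then have "real k < real n * (real m + 1)"
    by (metis of_nat_1 of_nat_add of_nat_less_iff of_nat_mult)
  then have "real k * dt < real n * (real m + 1) * dt"
    using dt by (rule mult_strict_right_mono)
  then have "real k * dt < real n * dt * (real m + 1)"
    by (simp add: algebra_simps)
  also have "\<dots> \<le> c * (real m + 1)"
    using n_dt by (intro mult_right_mono) auto
  finally have "real k * dt / c \<le> real m + 1"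
    using c by (simp add: divide_le_eq mult.commute)
  then have "ln q * (real m + 1) \<le> ln q * (real k * dt / c)"
    using q by (intro mult_left_mono_neg) auto
  then have "exp (real m * ln q) \<le> exp (- ln q + ln q * (real k * dt / c))"
    by (simp add: algebra_simps)
  also have "\<dots> = exp (- ln q) * exp (ln q * (real k * dt / c))"
    by (rule exp_add)
  also have "\<dots> = (1 / q) * exp (- (- ln q / c) * real k * dt)"
    using q by (simp add: exp_minus inverse_eq_divide)
  finally show ?thesis
    unfolding m_def[symmetric] using q by (simp add: exp_of_nat_mult)
qed

lemma (in minorized_kernel) Phi_exponential_convergence:
  assumes "real n * dt \<le> c" "0 < c"
    and "torus_prob \<mu>" "torus_prob \<nu>" "FK_invariant K dt \<nu>" "bmeas_torus g"
  shows "\<bar>Phi K dt k \<mu> g - integral\<^sup>L \<nu> g\<bar> \<le>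
    2 / (1 - \<alpha>\<^sup>2) * exp (- (- ln (1 - \<alpha>\<^sup>2) / c) * real k * dt) * supnorm g"
proof -
  define q where "q = 1 - \<alpha>\<^sup>2"
  have q: "0 < q" "q < 1"
    unfolding q_def by (rule contraction_factor)+
  have "\<bar>Phi K dt k \<mu> g - integral\<^sup>L \<nu> g\<bar> \<le> 2 * supnorm g * q ^ (k div n)"
    unfolding q_def by (rule Phi_dist_invariant[OF assms(3-6)])
  also have "\<dots> \<le> 2 * supnorm g * ((1 / q) * exp (- (- ln q / c) * real k * dt))"
    using geometric_le_exp[OF q n_pos dt_pos assms(2,1)] supnorm_nonneg[OF assms(6)]
    by (intro mult_left_mono) auto
  also have "\<dots> = 2 / q * exp (- (- ln q / c) * real k * dt) * supnorm g"
    by simp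
  finally show ?thesis
    unfolding q_def .
qed

lemma ceiling_div_mult_le:
  fixes T dt :: real
  assumes "0 < dt" "dt \<le> T"
  shows "real (nat \<lceil>T / dt\<rceil>) * dt \<le> 2 * T"
proof -
  have "real (nat \<lceil>T / dt\<rceil>) \<le> T / dt + 1"
    using assms of_int_ceiling_le_add_one[of "T / dt"] by simp
  then have "real (nat \<lceil>T / dt\<rceil>) * dt \<le> (T / dt + 1) * dt"
    using assms by (intro mult_right_mono) auto
  also have "\<dots> = T + dt"
    using assms by (simp add: field_simps)
  finally show ?thesis
    using assms by simp
qed

lemma minorized_kernel_of_assumption6:
  assumes "kernel_torus K" "assumption6 K T" "0 < T"
  obtains dtstar \<alpha> \<eta> where "0 < dtstar"
    and "\<And>dt. 0 < dt \<Longrightarrow> dt \<le> dtstar \<Longrightarrow> minorized_kernel K dt (nat \<lceil>T / dt\<rceil>) \<alpha> \<eta>"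
proof -
  obtain dtstar \<eta> \<alpha> where "0 < dtstar" "torus_prob \<eta>" "0 < \<alpha>" "\<alpha> < 1"
    and bounds: "\<And>dt. 0 < dt \<and> dt \<le> dtstar \<Longrightarrow> strong_feller K dt \<and>
      (\<forall>g. bmeas_torus g \<and> (\<forall>x. 0 \<le> g x) \<longrightarrow> (\<forall>x.
         \<alpha> * integral\<^sup>L \<eta> g \<le> (Qop K dt ^^ nat \<lceil>T / dt\<rceil>) g x \<and>
         (Qop K dt ^^ nat \<lceil>T / dt\<rceil>) g x \<le> integral\<^sup>L \<eta> g / \<alpha>))"
    using assms(2) unfolding assumption6_def by blast
  have "minorized_kernel K dt (nat \<lceil>T / dt\<rceil>) \<alpha> \<eta>" if dt: "0 < dt" "dt \<le> dtstar" for dt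
  proof
    show "0 < nat \<lceil>T / dt\<rceil>"
      using dt assms(3) by simp
    show "strong_feller K dt"
      using bounds dt by blast
    show "\<alpha> * integral\<^sup>L \<eta> g \<le> (Qop K dt ^^ nat \<lceil>T / dt\<rceil>) g x"
      and "(Qop K dt ^^ nat \<lceil>T / dt\<rceil>) g x \<le> integral\<^sup>L \<eta> g / \<alpha>"
      if "bmeas_torus g" "\<And>x. 0 \<le> g x" for g x
      using bounds[of dt] dt that by blast+
  qed (use assms(1) dt \<open>torus_prob \<eta>\<close> \<open>0 < \<alpha>\<close> \<open>\<alpha> < 1\<close> in auto)
  with \<open>0 < dtstar\<close> show ?thesis
    using that by blast
qed

theorem theorem4:
  fixes b :: "real^'d::finite \<Rightarrow> real^'d"
    and f :: "real^'d \<Rightarrow> real"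
    and K :: "real \<Rightarrow> real^'d \<Rightarrow> (real^'d) measure"
    and T :: real
  assumes "\<forall>j. smooth_torus (\<lambda>x. b x $ j)"
    and "smooth_torus f"
    and "consistent_discretization b f K"
    and "T > 0"
    and "assumption6 K T"
  shows "\<exists>dtss>0.
    (\<forall>dt. 0 < dt \<and> dt \<le> dtss \<longrightarrow> (\<exists>!\<nu>. torus_prob \<nu> \<and> FK_invariant K dt \<nu>)) \<and>
    (\<exists>\<kappa>>0. \<exists>C>0. \<forall>dt. 0 < dt \<and> dt \<le> dtss \<longrightarrow>
       (\<forall>\<nu>. torus_prob \<nu> \<and> FK_invariant K dt \<nu> \<longrightarrow>
         (\<forall>g \<mu> k. bmeas_torus g \<and> torus_prob \<mu> \<longrightarrow>
            \<bar>Phi K dt k \<mu> g - integral\<^sup>L \<nu> g\<bar> \<le> C * exp (- \<kappa> * real k * dt) * supnorm g)))"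
proof -
  have "kernel_torus K"
    using assms(3) unfolding consistent_discretization_def by blast
  then obtain dtstar \<alpha> \<eta> where "0 < dtstar"
    and minorized: "\<And>dt. 0 < dt \<Longrightarrow> dt \<le> dtstar \<Longrightarrow> minorized_kernel K dt (nat \<lceil>T / dt\<rceil>) \<alpha> \<eta>"
    using minorized_kernel_of_assumption6[OF _ assms(5,4)] by blast
  define q where "q = 1 - \<alpha>\<^sup>2"
  have "0 < q" "q < 1"
    using minorized_kernel.contraction_factor[OF minorized[OF \<open>0 < dtstar\<close> order_refl]]
    unfolding q_def by simp_all
  define dtss \<kappa> C where "dtss = min dtstar T" and "\<kappa> = - ln q / (2 * T)" and "C = 2 / q"
  have "0 < dtss" "0 < \<kappa>" "0 < C"
    unfolding dtss_def \<kappa>_def C_def using \<open>0 < dtstar\<close> \<open>0 < q\<close> \<open>q < 1\<close> assms(4)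
    by (simp_all add: divide_neg_pos)
  moreover have "\<bar>Phi K dt k \<mu> g - integral\<^sup>L \<nu> g\<bar> \<le> C * exp (- \<kappa> * real k * dt) * supnorm g"
    if "0 < dt" "dt \<le> dtss" "torus_prob \<nu>" "FK_invariant K dt \<nu>" "bmeas_torus g" "torus_prob \<mu>"
    for dt \<nu> g \<mu> k
  proof -
    have "minorized_kernel K dt (nat \<lceil>T / dt\<rceil>) \<alpha> \<eta>" "dt \<le> T"
      using minorized that(1,2) unfolding dtss_def by simp_all
    from minorized_kernel.Phi_exponential_convergence[OF this(1)
        ceiling_div_mult_le[OF that(1) this(2)] _ that(6,3,4,5)]
    show ?thesis
      unfolding \<kappa>_def C_def q_def using assms(4) by simp
  qed
  moreover have "\<exists>!\<nu>. torus_prob \<nu> \<and> FK_invariant K dt \<nu>" if "0 < dt" "dt \<le> dtss" for dt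
    using minorized_kernel.ex1_FK_invariant[OF minorized] that unfolding dtss_def by simp
  ultimately show ?thesis
    by (intro exI[of _ dtss] exI[of _ \<kappa>] exI[of _ C] conjI allI impI) auto
qed

end
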